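(* (Generalized Pigeonhole Principle.) Let $n\geq 1$, $r\geq 0$ and $s$ be integers with $0\leq s<n$. If $rn+s$ or more objects are placed in $n$ boxes, then for each integer $m$ with $1\leq m\leq n$ there exist $m$ boxes which together contain at least $rm+\min(s,m)$ objects. *)

theory Defs
  imports Main
begin

end

theory Submission
  imports Defs
begin

text \<open>Induction on the number of boxes. Let \<open>x\<close> be a box with fewest objects. If \<open>x\<close> holds
  at most \<open>r\<close> objects, the other boxes still hold at least \<open>r(n-1) + s\<close> and induction applies;
  otherwise every box holds at least \<open>r + 1\<close>, so any \<open>m\<close> boxes hold \<open>rm + m \<ge> rm + min s m\<close>.\<close>

lemma subset_card_sum_ge:
  fixes c :: "'b \<Rightarrow> nat"
  assumes "finite B" and "card B = n" and "r * n + s \<le> (\<Sum>b\<in>B. c b)" and "m \<le> n"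
  shows "\<exists>M \<subseteq> B. card M = m \<and> r * m + min s m \<le> (\<Sum>b\<in>M. c b)"
  using assms
proof (induction n arbitrary: B m)
  case 0
  then show ?case by (intro exI[of _ "{}"]) auto
next
  case (Suc n)
  show ?case
  proof (cases "m = Suc n")
    case True
    with Suc.prems show ?thesis by (intro exI[of _ B]) auto
  next
    case False
    with Suc.prems have "m \<le> n" by simp
    from Suc.prems have "B \<noteq> {}" by auto
    with \<open>finite B\<close> obtain x where "x \<in> B" and x_min: "\<And>y. y \<in> B \<Longrightarrow> c x \<le> c y"
      by (metis (no_types, lifting) arg_min_if_finite(1) arg_min_least)
    show ?thesis
    proof (cases "c x \<le> r")
      case True
      have "(\<Sum>b\<in>B. c b) = c x + (\<Sum>b\<in>B - {x}. c b)"
        using \<open>finite B\<close> \<open>x \<in> B\<close> by (simp add: sum.remove)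
      with Suc.prems(3) True have "r * n + s \<le> (\<Sum>b\<in>B - {x}. c b)" by simp
      moreover have "card (B - {x}) = n" using Suc.prems \<open>x \<in> B\<close> by simp
      ultimately obtain M where "M \<subseteq> B - {x}" "card M = m" "r * m + min s m \<le> (\<Sum>b\<in>M. c b)"
        using Suc.IH[of "B - {x}" m] \<open>finite B\<close> \<open>m \<le> n\<close> by auto
      then show ?thesis by blast
    next
      case False
      obtain M where "M \<subseteq> B" "card M = m"
        using obtain_subset_with_card_n[of m B] Suc.prems \<open>m \<le> n\<close> by auto
      have "r + 1 \<le> c b" if "b \<in> M" for b
        using x_min[of b] False that \<open>M \<subseteq> B\<close> by auto
      then have "m * (r + 1) \<le> (\<Sum>b\<in>M. c b)"
        using sum_bounded_below[of M "r + 1" c] \<open>card M = m\<close> by simp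
      then have "r * m + min s m \<le> (\<Sum>b\<in>M. c b)" by (simp add: algebra_simps)
      with \<open>M \<subseteq> B\<close> \<open>card M = m\<close> show ?thesis by blast
    qed
  qed
qed

theorem theorem2:
  fixes B :: "'b set" and c :: "'b \<Rightarrow> nat" and n r s m :: nat
  assumes "finite B" and "card B = n" and "n \<ge> 1"
    and "s < n"
    and "(\<Sum>b\<in>B. c b) \<ge> r * n + s"
    and "1 \<le> m" and "m \<le> n"
  shows "\<exists>M \<subseteq> B. card M = m \<and> (\<Sum>b\<in>M. c b) \<ge> r * m + min s m"
  using subset_card_sum_ge[OF assms(1,2,5,7)] .

end
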